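(* Let $N\ge2$ and let $q$ be a primitive $4N$-th root of unity with $q^N=\mathbf{i}$. Then: (a) $q_\lambda\neq0$ for every strict partition $\lambda$ with $\lambda_1<N$, and $q_\lambda=0$ for every strict partition $\lambda$ with $\lambda_1=N+1$ and $\lambda_2\le N-2$; (b) $a_{N-m}=a_m$ for $0\le m\le N$, where $a_0=1$; (c) $q_{(N,\lambda_2,\dots,\lambda_r)}=q_{(\lambda_2,\dots,\lambda_r)}$ for any strict partition $(N,\lambda_2,\dots,\lambda_r)$.
   Context: $\mathbf{i}=\sqrt{-1}$, $[k]=(q^k-q^{-k})/(q-q^{-1})$. For $m\ge1$, $a_m=\prod_{j=1}^m \mathbf{i}\,\frac{q^{j-1}+q^{1-j}}{q^j-q^{-j}}$, and for a strict partition $\lambda=(\lambda_1>\dots>\lambda_r>0)$ the rational function $q_\lambda=\prod_{j=1}^r a_{\lambda_j}\prod_{1\le i<j\le r}\frac{[\lambda_i-\lambda_j]}{[\lambda_i+\lambda_j]}$ (with $q_\emptyset=1$), evaluated at the given $q$. *)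

theory Defs
  imports Complex_Main
begin

definition qint :: "complex \<Rightarrow> nat \<Rightarrow> complex" where
  "qint q k = (q ^ k - inverse q ^ k) / (q - inverse q)"

definition a_coef :: "complex \<Rightarrow> nat \<Rightarrow> complex" where
  "a_coef q m = (\<Prod>j=1..m. \<i> * (q ^ (j - 1) + inverse q ^ (j - 1)) / (q ^ j - inverse q ^ j))"

definition strict_partition :: "nat list \<Rightarrow> bool" where
  "strict_partition xs \<longleftrightarrow> sorted_wrt (>) xs \<and> (\<forall>x\<in>set xs. 0 < x)"

definition q_lambda :: "complex \<Rightarrow> nat list \<Rightarrow> complex" where
  "q_lambda q xs =
     (\<Prod>i<length xs. a_coef q (xs ! i)) *
     (\<Prod>j<length xs. \<Prod>i<j. qint q (xs ! i - xs ! j) / qint q (xs ! i + xs ! j))"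

definition primitive_root_of_unity :: "nat \<Rightarrow> complex \<Rightarrow> bool" where
  "primitive_root_of_unity n z \<longleftrightarrow> z ^ n = 1 \<and> (\<forall>k. 0 < k \<and> k < n \<longrightarrow> z ^ k \<noteq> 1)"

end

theory Submission
  imports Defs
begin

text \<open>
  Write a_m as the product of the factors f_j = i (q^(j-1) + q^(1-j)) / (q^j - q^(-j)).
  Because q^N = i, the substitution j -> N + 1 - j inverts f_j, and f_(N+1) = 0 since
  q^N + q^(-N) = i - i. Pairing f_j with f_(N+1-j), the middle factor for odd N being 1,
  gives a_(N-m) = a_m and in particular a_N = 1; the vanishing of f_(N+1) kills a_m, hence
  q_lambda, as soon as some part exceeds N. The same substitution gives [N - y] = [N + y], so
  prepending the part N multiplies q_lambda by a_N prod_i [N - lambda_i] / [N + lambda_i] = 1.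
  Nonvanishing for lambda_1 < N holds because q has order 4N, so that q^j differs from q^(-j)
  for 0 < j < 2N and from -q^(-j) for j < N.
\<close>

lemma prod_reflect_atLeastAtMost:
  fixes f :: "nat \<Rightarrow> 'a::comm_monoid_mult"
  assumes pair: "\<And>t. t < n \<Longrightarrow> f (Suc t) * f (n - t) = 1"
    and middle: "odd n \<Longrightarrow> f (Suc (n div 2)) = 1"
    and "m \<le> n"
  shows "(\<Prod>j=1..n - m. f j) = (\<Prod>j=1..m. f j)"
proof -
  have low: "(\<Prod>j=1..n - k. f j) = (\<Prod>j=1..k. f j)" if "k \<le> n div 2" for k
    using that
  proof (induction k rule: inc_induct)
    case base
    show ?case
    proof (cases "even n")
      case True
      then have "n - n div 2 = n div 2" by presburger
      then show ?thesis by simp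
    next
      case False
      then have "n - n div 2 = Suc (n div 2)" by presburger
      then show ?thesis using middle False by (simp add: prod.nat_ivl_Suc')
    qed
  next
    case (step k)
    have "n - k = Suc (n - Suc k)" using step.hyps by linarith
    then have "(\<Prod>j=1..n - k. f j) = (\<Prod>j=1..Suc k. f j) * f (n - k)"
      using step.IH by (simp add: prod.nat_ivl_Suc')
    also have "\<dots> = (\<Prod>j=1..k. f j) * (f (Suc k) * f (n - k))"
      by (simp add: prod.nat_ivl_Suc' mult.assoc)
    also have "\<dots> = (\<Prod>j=1..k. f j)"
      using pair[of k] step.hyps by simp
    finally show ?case .
  qed
  show ?thesis
  proof (cases "m \<le> n div 2")
    case True
    then show ?thesis by (rule low)
  next
    case False
    then have "(\<Prod>j=1..n - (n - m). f j) = (\<Prod>j=1..n - m. f j)"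
      by (intro low) linarith
    then show ?thesis using \<open>m \<le> n\<close> by simp
  qed
qed

lemma primitive_root_of_unity_power_eq_1_iff:
  assumes "primitive_root_of_unity n z" "0 < n"
  shows "z ^ k = 1 \<longleftrightarrow> n dvd k"
proof -
  have zn: "z ^ n = 1" and below: "\<And>k. 0 < k \<Longrightarrow> k < n \<Longrightarrow> z ^ k \<noteq> 1"
    using assms(1) unfolding primitive_root_of_unity_def by auto
  have "z ^ k = (z ^ n) ^ (k div n) * z ^ (k mod n)"
    by (simp add: power_mult[symmetric] power_add[symmetric])
  then have "z ^ k = z ^ (k mod n)"
    by (simp add: zn)
  moreover have "k mod n < n"
    using assms(2) by simp
  ultimately show ?thesis
    using below[of "k mod n"] by (auto simp: dvd_eq_mod_eq_0)
qed

lemma primitive_root_of_unity_half_power: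
  assumes "primitive_root_of_unity (2 * n) z" "0 < n"
  shows "z ^ n = -1"
proof -
  have "(z ^ n)\<^sup>2 = 1" "z ^ n \<noteq> 1"
    using assms unfolding primitive_root_of_unity_def
    by (auto simp: power_mult[symmetric] mult.commute)
  then show ?thesis
    by (simp add: power2_eq_1_iff)
qed

lemma primitive_root_of_unity_neq_0:
  assumes "primitive_root_of_unity n z" "0 < n"
  shows "z \<noteq> 0"
  using assms unfolding primitive_root_of_unity_def by (auto simp: power_0_left)

lemma power_eq_imaginary_unit_neq_0:
  fixes q :: complex
  assumes "q ^ N = \<i>"
  shows "q \<noteq> 0"
  using assms by (auto simp: power_0_left split: if_splits)

definition a_factor :: "complex \<Rightarrow> nat \<Rightarrow> complex" where
  "a_factor q j = \<i> * (q ^ (j - 1) + inverse q ^ (j - 1)) / (q ^ j - inverse q ^ j)"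

lemma a_coef_eq_prod: "a_coef q m = (\<Prod>j=1..m. a_factor q j)"
  unfolding a_coef_def a_factor_def ..

lemma a_factor_Suc:
  "a_factor q (Suc t) = \<i> * (q ^ t + inverse (q ^ t)) / (q ^ Suc t - inverse (q ^ Suc t))"
  unfolding a_factor_def by (simp add: power_inverse)

lemma power_minus_inverse_neq_0:
  fixes q :: complex
  assumes "primitive_root_of_unity (4 * N) q" "0 < j" "j < 2 * N"
  shows "q ^ j - inverse q ^ j \<noteq> 0"
proof
  assume "q ^ j - inverse q ^ j = 0"
  moreover have "q \<noteq> 0"
    using assms by (intro primitive_root_of_unity_neq_0[OF assms(1)]) simp
  ultimately have "q ^ (2 * j) = 1"
    by (simp add: power_inverse power_mult power2_eq_square field_simps)
  then have "4 * N dvd 2 * j"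
    using assms by (simp add: primitive_root_of_unity_power_eq_1_iff)
  then have "2 * N dvd j"
    using nat_mult_dvd_cancel_disj[of 2 "2 * N" j] by (simp add: mult.assoc)
  then show False
    using assms(2,3) by (auto dest: dvd_imp_le)
qed

lemma power_plus_inverse_neq_0:
  fixes q :: complex
  assumes "primitive_root_of_unity (4 * N) q" "j < N"
  shows "q ^ j + inverse q ^ j \<noteq> 0"
proof
  assume "q ^ j + inverse q ^ j = 0"
  moreover have "q \<noteq> 0"
    using assms by (intro primitive_root_of_unity_neq_0[OF assms(1)]) simp
  ultimately have "q ^ (2 * j) = -1"
    by (simp add: power_inverse power_mult power2_eq_square field_simps add_eq_0_iff)
  moreover have "q ^ (2 * N) = -1"
    using assms by (intro primitive_root_of_unity_half_power) (auto simp: mult.assoc)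
  ultimately have "q ^ (2 * N - 2 * j) = 1"
    using assms(2) \<open>q \<noteq> 0\<close> by (simp add: power_diff)
  then have "4 * N dvd 2 * N - 2 * j"
    using assms by (simp add: primitive_root_of_unity_power_eq_1_iff)
  then show False
    using assms(2) by (auto dest: dvd_imp_le)
qed

lemma qint_neq_0:
  assumes "primitive_root_of_unity (4 * N) q" "0 < k" "k < 2 * N"
  shows "qint q k \<noteq> 0"
proof -
  have "q ^ k - inverse q ^ k \<noteq> 0" "q ^ 1 - inverse q ^ 1 \<noteq> 0"
    using power_minus_inverse_neq_0[OF assms(1)] assms(2,3) by auto
  then show ?thesis
    unfolding qint_def by simp
qed

lemma a_factor_neq_0:
  assumes "primitive_root_of_unity (4 * N) q" "0 < j" "j \<le> N"
  shows "a_factor q j \<noteq> 0"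
  using power_plus_inverse_neq_0[OF assms(1), of "j - 1"]
    power_minus_inverse_neq_0[OF assms(1), of j] assms(2,3)
  unfolding a_factor_def by simp

lemma a_coef_neq_0:
  assumes "primitive_root_of_unity (4 * N) q" "m \<le> N"
  shows "a_coef q m \<noteq> 0"
  using a_factor_neq_0[OF assms(1)] assms(2) unfolding a_coef_eq_prod by simp

lemma a_factor_Suc_eq_0:
  fixes q :: complex
  assumes "q ^ N = \<i>"
  shows "a_factor q (Suc N) = 0"
  using assms by (simp add: a_factor_Suc power_inverse)

lemma a_coef_eq_0:
  fixes q :: complex
  assumes "q ^ N = \<i>" "N < m"
  shows "a_coef q m = 0"
  using a_factor_Suc_eq_0[OF assms(1)] assms(2) unfolding a_coef_eq_prod
  by (auto simp: prod_zero_iff)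

lemma a_factor_reflect:
  fixes q :: complex
  assumes "q ^ N = \<i>" "t < N"
  shows "a_factor q (N - t) = inverse (a_factor q (Suc t))"
proof -
  define x where "x = q ^ t"
  have "q \<noteq> 0"
    by (rule power_eq_imaginary_unit_neq_0[OF assms(1)])
  then have "x \<noteq> 0"
    by (simp add: x_def)
  obtain s where s: "N - t = Suc s"
    using assms(2) by (metis Suc_diff_Suc)
  have "s + Suc t = N"
    using s assms(2) by simp
  moreover have "q ^ s * (x * q) = q ^ (s + Suc t)"
    by (simp add: x_def power_add ac_simps)
  ultimately have "q ^ s * (x * q) = \<i>"
    using assms(1) by simp
  then have qs: "q ^ s = \<i> / (x * q)"
    using \<open>x \<noteq> 0\<close> \<open>q \<noteq> 0\<close> by (simp add: field_simps)
  have num: "\<i> * (q ^ s + inverse (q ^ s)) = x * q - inverse (x * q)"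
    unfolding qs using \<open>x \<noteq> 0\<close> \<open>q \<noteq> 0\<close> by (simp add: field_simps)
  have den: "q ^ s * q - inverse (q ^ s * q) = \<i> * (x + inverse x)"
    unfolding qs using \<open>x \<noteq> 0\<close> \<open>q \<noteq> 0\<close> by (simp add: field_simps)
  have "a_factor q (N - t) = (x * q - inverse (x * q)) / (\<i> * (x + inverse x))"
    unfolding s a_factor_Suc power_Suc2 num den ..
  also have "\<dots> = inverse (a_factor q (Suc t))"
    unfolding a_factor_Suc x_def by (simp add: mult.commute)
  finally show ?thesis .
qed

lemma qint_reflect:
  fixes q :: complex
  assumes "q ^ N = \<i>" "y \<le> N"
  shows "qint q (N - y) = qint q (N + y)"
proof -
  define x where "x = q ^ y"
  have "q \<noteq> 0"
    by (rule power_eq_imaginary_unit_neq_0[OF assms(1)])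
  then have "x \<noteq> 0"
    by (simp add: x_def)
  have "q ^ (N - y) * x = \<i>"
    using assms unfolding x_def by (simp add: power_add[symmetric])
  then have minus: "q ^ (N - y) = \<i> / x"
    using \<open>x \<noteq> 0\<close> by (simp add: field_simps)
  have plus: "q ^ (N + y) = \<i> * x"
    using assms(1) unfolding x_def by (simp add: power_add)
  have "q ^ (N - y) - inverse (q ^ (N - y)) = q ^ (N + y) - inverse (q ^ (N + y))"
    unfolding minus plus using \<open>x \<noteq> 0\<close> by (simp add: field_simps)
  then show ?thesis
    unfolding qint_def power_inverse by simp
qed

lemma a_factor_middle:
  fixes q :: complex
  assumes "primitive_root_of_unity (4 * N) q" "q ^ N = \<i>" "N = 2 * t + 1"
  shows "a_factor q (Suc t) = 1"
proof -
  define x where "x = q ^ t"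
  have "q \<noteq> 0"
    by (rule power_eq_imaginary_unit_neq_0[OF assms(2)])
  then have "x \<noteq> 0"
    by (simp add: x_def)
  have "x * (x * q) = \<i>"
    using assms(2,3) unfolding x_def by (simp add: power_mult power2_eq_square ac_simps)
  then have xq: "x * q = \<i> / x"
    using \<open>x \<noteq> 0\<close> by (simp add: field_simps)
  have "x * q - inverse (x * q) \<noteq> 0"
    using power_minus_inverse_neq_0[OF assms(1), of "Suc t"] assms(3)
    by (simp add: x_def power_inverse mult.commute)
  moreover have "\<i> * (x + inverse x) = x * q - inverse (x * q)"
    unfolding xq using \<open>x \<noteq> 0\<close> by (simp add: field_simps)
  ultimately show ?thesis
    unfolding a_factor_Suc power_Suc2 x_def[symmetric] by simp
qed

lemma a_coef_reflect:
  fixes q :: complex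
  assumes "primitive_root_of_unity (4 * N) q" "q ^ N = \<i>" "m \<le> N"
  shows "a_coef q (N - m) = a_coef q m"
  unfolding a_coef_eq_prod
proof (rule prod_reflect_atLeastAtMost[OF _ _ assms(3)])
  fix t
  assume "t < N"
  then show "a_factor q (Suc t) * a_factor q (N - t) = 1"
    using a_factor_neq_0[OF assms(1), of "Suc t"] a_factor_reflect[OF assms(2)] by simp
next
  assume "odd N"
  then show "a_factor q (Suc (N div 2)) = 1"
    using a_factor_middle[OF assms(1,2)] by (metis odd_two_times_div_two_succ)
qed

lemma q_lambda_Cons:
  "q_lambda q (x # xs) =
     a_coef q x * (\<Prod>j<length xs. qint q (x - xs ! j) / qint q (x + xs ! j)) * q_lambda q xs"
proof -
  have "(\<Prod>j<length (x # xs). \<Prod>i<j.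
            qint q ((x # xs) ! i - (x # xs) ! j) / qint q ((x # xs) ! i + (x # xs) ! j))
      = (\<Prod>j<length xs. qint q (x - xs ! j) / qint q (x + xs ! j)) *
        (\<Prod>j<length xs. \<Prod>i<j. qint q (xs ! i - xs ! j) / qint q (xs ! i + xs ! j))"
    by (simp only: length_Cons prod.lessThan_Suc_shift nth_Cons_0 nth_Cons_Suc lessThan_0
        prod.empty mult_1_left prod.distrib)
  then show ?thesis
    unfolding q_lambda_def by (simp add: prod.lessThan_Suc_shift del: prod.lessThan_Suc)
qed

lemma q_lambda_neq_0:
  assumes "primitive_root_of_unity (4 * N) q" "strict_partition xs" "\<forall>x\<in>set xs. x < N"
  shows "q_lambda q xs \<noteq> 0"
  using assms(2,3)
proof (induction xs)
  case Nil
  then show ?case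
    by (simp add: q_lambda_def)
next
  case (Cons x xs)
  then have "strict_partition xs" "\<forall>y\<in>set xs. y < x \<and> 0 < y" "x < N"
    by (auto simp: strict_partition_def)
  then have "qint q (x - xs ! j) \<noteq> 0 \<and> qint q (x + xs ! j) \<noteq> 0" if "j < length xs" for j
    using qint_neq_0[OF assms(1)] nth_mem[OF that] by force
  moreover have "q_lambda q xs \<noteq> 0"
    using Cons \<open>strict_partition xs\<close> by simp
  ultimately show ?case
    using a_coef_neq_0[OF assms(1)] \<open>x < N\<close> by (simp add: q_lambda_Cons)
qed

lemma q_lambda_eq_0:
  fixes q :: complex
  assumes "q ^ N = \<i>" "x \<in> set xs" "N < x"
  shows "q_lambda q xs = 0"
proof -
  obtain i where "i < length xs" "xs ! i = x"
    using assms(2) by (auto simp: in_set_conv_nth)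
  then show ?thesis
    using a_coef_eq_0[OF assms(1,3)] unfolding q_lambda_def by (auto simp: prod_zero_iff)
qed

lemma q_lambda_Cons_N:
  fixes q :: complex
  assumes "primitive_root_of_unity (4 * N) q" "q ^ N = \<i>" "strict_partition (N # ys)"
  shows "q_lambda q (N # ys) = q_lambda q ys"
proof -
  have "a_coef q N = 1"
    using a_coef_reflect[OF assms(1,2), of 0] by (simp add: a_coef_def)
  moreover have "qint q (N - ys ! j) / qint q (N + ys ! j) = 1" if "j < length ys" for j
  proof -
    have "ys ! j < N"
      using assms(3) nth_mem[OF that] by (auto simp: strict_partition_def)
    then show ?thesis
      using qint_reflect[OF assms(2)] qint_neq_0[OF assms(1), of "N + ys ! j"] by simp
  qed
  ultimately show ?thesis
    by (simp add: q_lambda_Cons)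
qed

theorem corollary2p28:
  fixes N :: nat and q :: complex
  assumes "N \<ge> 2"
    and "primitive_root_of_unity (4 * N) q"
    and "q ^ N = \<i>"
  shows "(\<forall>xs. strict_partition xs \<and> (\<forall>x\<in>set xs. x < N) \<longrightarrow> q_lambda q xs \<noteq> 0)
       \<and> (\<forall>ys. strict_partition ((N + 1) # ys) \<and> (\<forall>y\<in>set ys. y \<le> N - 2)
              \<longrightarrow> q_lambda q ((N + 1) # ys) = 0)
       \<and> (\<forall>m\<le>N. a_coef q (N - m) = a_coef q m)
       \<and> (\<forall>ys. strict_partition (N # ys) \<longrightarrow> q_lambda q (N # ys) = q_lambda q ys)"
proof -
  have "q_lambda q ((N + 1) # ys) = 0" for ys
    by (rule q_lambda_eq_0[OF assms(3), of "N + 1"]) simp_all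
  then show ?thesis
    using q_lambda_neq_0[OF assms(2)] a_coef_reflect[OF assms(2,3)] q_lambda_Cons_N[OF assms(2,3)]
    by blast
qed

end
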